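(* Let ${\boldsymbol\lambda}=\{\lambda_v\}_{v\in V}$ be a system of weights on a directed forest $\mathcal{T}_1=(V,\mathsf{p}_1)$ and let $\mathcal{T}_2=(V,\mathsf{p}_2)$ be a directed forest thicker than $\mathcal{T}_1$. Then ${\boldsymbol\lambda}$ is a system of weights on $\mathcal{T}_2$, and the weighted shift with weights ${\boldsymbol\lambda}$ on $\mathcal{T}_1$ and the weighted shift with weights ${\boldsymbol\lambda}$ on $\mathcal{T}_2$ are equal as operators in $\ell^2(V)$ (same domain and same action).
   Context: A directed forest is a pair $\mathcal{T}=(V,\mathsf{p})$ where $V$ is a nonempty set and $\mathsf{p}\colon V\to V$ satisfies: if $n\in\mathbb{N}$, $v\in V$ and $\mathsf{p}^n(v)=v$, then $\mathsf{p}(v)=v$; roots are $\mathrm{root}(\mathcal{T})=\{v:\mathsf{p}(v)=v\}$. $\mathcal{T}_2=(V,\mathsf{p}_2)$ is thicker than $\mathcal{T}_1=(V,\mathsf{p}_1)$ if $\mathsf{p}_1(v)\in\{v,\mathsf{p}_2(v)\}$ for all $v\in V$. A system of weights on $\mathcal{T}$ is a family $\{\lambda_v\}_{v\in V}\subseteq\mathbb{C}$ with $\lambda_\omega=0$ for every $\omega\in\mathrm{root}(\mathcal{T})$. The weighted shift $S_{\boldsymbol\lambda}$ on $\mathcal{T}$ is the operator in $\ell^2(V)$ with domain $\{f\in\ell^2(V):\Gamma_{\boldsymbol\lambda}(f)\in\ell^2(V)\}$ and $S_{\boldsymbol\lambda}f=\Gamma_{\boldsymbol\lambda}(f)$, where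 $\Gamma_{\boldsymbol\lambda}\colon\mathbb{C}^V\to\mathbb{C}^V$, $\Gamma_{\boldsymbol\lambda}(f)(v)=\lambda_v f(\mathsf{p}(v))$. *)

theory Defs
  imports "HOL-Analysis.Analysis"
begin

text \<open>The vertex set V is modelled by the (nonempty) type 'v.
  A directed forest is given by its parent map p.\<close>

definition directed_forest :: "('v \<Rightarrow> 'v) \<Rightarrow> bool" where
  "directed_forest p \<longleftrightarrow> (\<forall>n::nat. \<forall>v. n \<ge> 1 \<longrightarrow> (p ^^ n) v = v \<longrightarrow> p v = v)"

definition roots :: "('v \<Rightarrow> 'v) \<Rightarrow> 'v set" where
  "roots p = {v. p v = v}"

definition thicker :: "('v \<Rightarrow> 'v) \<Rightarrow> ('v \<Rightarrow> 'v) \<Rightarrow> bool" where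
  "thicker p2 p1 \<longleftrightarrow> (\<forall>v. p1 v \<in> {v, p2 v})"

definition system_of_weights :: "('v \<Rightarrow> 'v) \<Rightarrow> ('v \<Rightarrow> complex) \<Rightarrow> bool" where
  "system_of_weights p lam \<longleftrightarrow> (\<forall>w \<in> roots p. lam w = 0)"

definition in_l2 :: "('v \<Rightarrow> complex) \<Rightarrow> bool" where
  "in_l2 f \<longleftrightarrow> (\<lambda>v. (norm (f v))\<^sup>2) summable_on UNIV"

definition Gamma :: "('v \<Rightarrow> 'v) \<Rightarrow> ('v \<Rightarrow> complex) \<Rightarrow> ('v \<Rightarrow> complex) \<Rightarrow> ('v \<Rightarrow> complex)" where
  "Gamma p lam f = (\<lambda>v. lam v * f (p v))"

definition wshift_dom :: "('v \<Rightarrow> 'v) \<Rightarrow> ('v \<Rightarrow> complex) \<Rightarrow> ('v \<Rightarrow> complex) set" where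
  "wshift_dom p lam = {f. in_l2 f \<and> in_l2 (Gamma p lam f)}"

definition wshift :: "('v \<Rightarrow> 'v) \<Rightarrow> ('v \<Rightarrow> complex) \<Rightarrow> ('v \<Rightarrow> complex) \<Rightarrow> ('v \<Rightarrow> complex) option" where
  "wshift p lam f = (if f \<in> wshift_dom p lam then Some (Gamma p lam f) else None)"

end

theory Submission
  imports Defs
begin

text \<open>Where the two parent maps differ, v is a root of the thinner forest, so its weight
  vanishes and both shifts give 0 at v. Hence the two formal shifts coincide, and with them the
  domains and actions of the operators.\<close>

lemma roots_subset_if_thicker:
  assumes "thicker p2 p1"
  shows "roots p2 \<subseteq> roots p1"
  using assms unfolding thicker_def roots_def by force

lemma system_of_weights_antimono_roots:
  assumes "system_of_weights p1 lam" and "roots p2 \<subseteq> roots p1"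
  shows "system_of_weights p2 lam"
  using assms unfolding system_of_weights_def by blast

lemma Gamma_eq_if_thicker:
  assumes "thicker p2 p1" and "system_of_weights p1 lam"
  shows "Gamma p1 lam = Gamma p2 lam"
proof (intro ext)
  fix f v
  have "p1 v = v \<or> p1 v = p2 v"
    using assms(1) unfolding thicker_def by auto
  then show "Gamma p1 lam f v = Gamma p2 lam f v"
    using assms(2) unfolding Gamma_def system_of_weights_def roots_def by auto
qed

lemma wshift_eq_if_Gamma_eq:
  assumes "Gamma p lam = Gamma q mu"
  shows "wshift p lam = wshift q mu"
  unfolding wshift_def wshift_dom_def assms ..

theorem lemma3p7:
  fixes p1 p2 :: "'v \<Rightarrow> 'v" and lam :: "'v \<Rightarrow> complex"
  assumes "directed_forest p1" and "directed_forest p2"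
    and "system_of_weights p1 lam"
    and "thicker p2 p1"
  shows "system_of_weights p2 lam \<and> wshift p1 lam = wshift p2 lam"
proof
  show "system_of_weights p2 lam"
    using assms(3) roots_subset_if_thicker[OF assms(4)]
    by (rule system_of_weights_antimono_roots)
  show "wshift p1 lam = wshift p2 lam"
    using Gamma_eq_if_thicker[OF assms(4,3)] by (rule wshift_eq_if_Gamma_eq)
qed

end
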